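(* Let $n,m_A,m_B>0$ be integers, $A,B$ quantum systems of dimensions $m_A,m_B$, and $\psi_{AB}$ a bipartite state with $\psi_A=\mathrm{id}_{m_A}/m_A$ and $\psi_B=\mathrm{id}_{m_B}/m_B$. Let $\mathcal{T}:\mathcal{M}(B^n)\to\mathcal{M}(A^n)$ be the Markov super-operator with respect to $\psi_{AB}^{\otimes n}$. Then for every $Q\in\mathcal{M}(B^n)$ and every $S\subseteq[n]$, $\mathcal{T}(Q[S])=\mathcal{T}(Q)[S]$.
   Context: A standard orthonormal basis of $\mathcal{M}_k$ (complex $k\times k$ matrices with inner product $\langle X,Y\rangle=\frac1k\mathrm{Tr}X^\dagger Y$) is an orthonormal basis $\{\mathcal{B}_0,\ldots,\mathcal{B}_{k^2-1}\}$ of Hermitian matrices with $\mathcal{B}_0=\mathrm{id}_k$. For $\sigma\in\{0,\ldots,k^2-1\}^n$ put $\mathcal{B}_\sigma=\mathcal{B}_{\sigma_1}\otimes\cdots\otimes\mathcal{B}_{\sigma_n}$; every $X\in\mathcal{M}_k^{\otimes n}$ has a unique expansion $X=\sum_\sigma\widehat X(\sigma)\mathcal{B}_\sigma$. The Efron–Stein component is $X[S]=\sum_{\sigma:\{i:\sigma_i\neq0\}=S}\widehat X(\sigma)\mathcal{B}_\sigma$; it does not depend on the choice of standard orthonormal basis. On $A^n$ and $B^n$ the inner products are $\langle X,Y\rangle=\frac1{m_A^n}\mathrm{Tr}X^\dagger Y$ and $\frac1{m_B^n}\mathrm{Tr}X^\dagger Y$ respectively. The Markov super-operator with respect to $\psi_{AB}^{\otimes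 n}$ is the map $\mathcal{T}:\mathcal{M}(B^n)\to\mathcal{M}(A^n)$ with $\mathrm{Tr}((M^\dagger\otimes Q)\psi_{AB}^{\otimes n})=\langle M,\mathcal{T}(Q)\rangle$ for all $M\in\mathcal{M}(A^n)$, $Q\in\mathcal{M}(B^n)$. *)

theory Defs
  imports "HOL-Analysis.Analysis" "HOL-Library.Complex_Order" "HOL-Library.FuncSet"
begin

type_synonym cmat1 = "nat \<Rightarrow> nat \<Rightarrow> complex"
  (* single-site k x k matrix; only entries with indices < k are meaningful *)
type_synonym cmatn = "(nat \<Rightarrow> nat) \<Rightarrow> (nat \<Rightarrow> nat) \<Rightarrow> complex"
  (* matrix on (C^k)^{\<otimes> n}, rows/columns indexed by tuples x : {0..<n} \<rightarrow> {0..<k} *)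

definition idx :: "nat \<Rightarrow> nat \<Rightarrow> (nat \<Rightarrow> nat) set" where
  "idx n k = ({0..<n} \<rightarrow>\<^sub>E {0..<k})"

definition matspace :: "nat \<Rightarrow> nat \<Rightarrow> cmatn set" where
  "matspace n k = {X. \<forall>x y. (x \<notin> idx n k \<or> y \<notin> idx n k) \<longrightarrow> X x y = 0}"

definition ipn :: "nat \<Rightarrow> nat \<Rightarrow> cmatn \<Rightarrow> cmatn \<Rightarrow> complex" where
  "ipn n k X Y = (1 / of_nat (k ^ n)) *
     (\<Sum>x\<in>idx n k. \<Sum>y\<in>idx n k. cnj (X y x) * Y y x)"

text \<open>Standard orthonormal basis {B_0,...,B_{k^2-1}} of M_k: Hermitian,
  orthonormal w.r.t. (1/k) Tr(X^dagger Y), and B_0 = id_k.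
  (k^2 orthonormal elements of the k^2-dimensional space M_k form a basis.)\<close>
definition std_onb :: "nat \<Rightarrow> (nat \<Rightarrow> cmat1) \<Rightarrow> bool" where
  "std_onb k Bs \<longleftrightarrow>
     (\<forall>j<k^2. \<forall>x<k. \<forall>y<k. Bs j x y = cnj (Bs j y x)) \<and>
     (\<forall>j<k^2. \<forall>l<k^2. (1 / of_nat k) * (\<Sum>x<k. \<Sum>y<k. cnj (Bs j y x) * Bs l y x)
                         = (if j = l then 1 else 0)) \<and>
     (\<forall>x<k. \<forall>y<k. Bs 0 x y = (if x = y then 1 else 0))"

definition tensor_basis :: "nat \<Rightarrow> nat \<Rightarrow> (nat \<Rightarrow> cmat1) \<Rightarrow> (nat \<Rightarrow> nat) \<Rightarrow> cmatn" where
  "tensor_basis n k Bs \<sigma> = (\<lambda>x y. if x \<in> idx n k \<and> y \<in> idx n k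
       then (\<Prod>i<n. Bs (\<sigma> i) (x i) (y i)) else 0)"

definition coeffs :: "nat \<Rightarrow> nat \<Rightarrow> (nat \<Rightarrow> cmat1) \<Rightarrow> cmatn \<Rightarrow> (nat \<Rightarrow> nat) \<Rightarrow> complex" where
  "coeffs n k Bs X = (THE c. (\<forall>\<sigma>. \<sigma> \<notin> idx n (k^2) \<longrightarrow> c \<sigma> = 0) \<and>
      (\<forall>x\<in>idx n k. \<forall>y\<in>idx n k.
          X x y = (\<Sum>\<sigma>\<in>idx n (k^2). c \<sigma> * tensor_basis n k Bs \<sigma> x y)))"

definition efron_stein :: "nat \<Rightarrow> nat \<Rightarrow> (nat \<Rightarrow> cmat1) \<Rightarrow> cmatn \<Rightarrow> nat set \<Rightarrow> cmatn" where
  "efron_stein n k Bs X S = (\<lambda>x y.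
     \<Sum>\<sigma>\<in>{\<sigma>\<in>idx n (k^2). {i\<in>{0..<n}. \<sigma> i \<noteq> 0} = S}.
        coeffs n k Bs X \<sigma> * tensor_basis n k Bs \<sigma> x y)"

definition is_state :: "nat \<Rightarrow> nat \<Rightarrow> (nat \<times> nat \<Rightarrow> nat \<times> nat \<Rightarrow> complex) \<Rightarrow> bool" where
  "is_state mA mB psi \<longleftrightarrow>
     (\<forall>p\<in>{0..<mA} \<times> {0..<mB}. \<forall>q\<in>{0..<mA} \<times> {0..<mB}. psi p q = cnj (psi q p)) \<and>
     (\<forall>v :: nat \<times> nat \<Rightarrow> complex.
        0 \<le> (\<Sum>p\<in>{0..<mA} \<times> {0..<mB}. \<Sum>q\<in>{0..<mA} \<times> {0..<mB}. cnj (v p) * psi p q * v q)) \<and>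
     (\<Sum>p\<in>{0..<mA} \<times> {0..<mB}. psi p p) = 1"

definition marg_A :: "nat \<Rightarrow> (nat \<times> nat \<Rightarrow> nat \<times> nat \<Rightarrow> complex) \<Rightarrow> cmat1" where
  "marg_A mB psi = (\<lambda>a a'. \<Sum>b<mB. psi (a, b) (a', b))"
definition marg_B :: "nat \<Rightarrow> (nat \<times> nat \<Rightarrow> nat \<times> nat \<Rightarrow> complex) \<Rightarrow> cmat1" where
  "marg_B mA psi = (\<lambda>b b'. \<Sum>a<mA. psi (a, b) (a, b'))"

text \<open>Tr((M^dagger \<otimes> Q) psi^{\<otimes> n}), where A^n \<otimes> B^n is identified with (A \<otimes> B)^n
  in the canonical way: psi^{\<otimes> n}((a,b),(a',b')) = prod_i psi (a_i,b_i) (a'_i,b'_i).\<close>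
definition markov_pairing :: "nat \<Rightarrow> nat \<Rightarrow> nat \<Rightarrow> (nat \<times> nat \<Rightarrow> nat \<times> nat \<Rightarrow> complex)
    \<Rightarrow> cmatn \<Rightarrow> cmatn \<Rightarrow> complex" where
  "markov_pairing n mA mB psi M Q =
     (\<Sum>a\<in>idx n mA. \<Sum>a'\<in>idx n mA. \<Sum>b\<in>idx n mB. \<Sum>b'\<in>idx n mB.
        cnj (M a' a) * Q b b' * (\<Prod>i<n. psi (a' i, b' i) (a i, b i)))"

definition is_markov_op :: "nat \<Rightarrow> nat \<Rightarrow> nat \<Rightarrow> (nat \<times> nat \<Rightarrow> nat \<times> nat \<Rightarrow> complex)
    \<Rightarrow> (cmatn \<Rightarrow> cmatn) \<Rightarrow> bool" where
  "is_markov_op n mA mB psi T \<longleftrightarrow>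
     (\<forall>Q\<in>matspace n mB. T Q \<in> matspace n mA) \<and>
     (\<forall>M\<in>matspace n mA. \<forall>Q\<in>matspace n mB.
        markov_pairing n mA mB psi M Q = ipn n mA M (T Q))"

end

theory Submission
  imports Defs "Jordan_Normal_Form.Determinant"
begin

(* Both sides are determined by their coefficients <B_tau, .> in the tensor basis, and
  <B_tau, T Y> is the Markov pairing Tr((B_tau^dagger \<otimes> Y) psi^{\<otimes> n}).  On tensor basis
  elements this pairing factorises over the sites into Tr((B_j^dagger \<otimes> B_l) psi).  For l = 0 the
  factor is Tr(B_j^dagger psi_A) = Tr(B_j^dagger)/m_A = <B_j, B_0>, which vanishes for j \<noteq> 0, and
  symmetrically (using psi_B) for j = 0 and l \<noteq> 0.  Hence B_tau pairs to zero with every B_sigma of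
  a different support, so the coefficient of T(Q[S]) at B_tau is that of T Q if tau has support S
  and 0 otherwise: exactly the coefficients of (T Q)[S]. *)

lemma square_orthogonal_rows_imp_orthogonal_cols:
  fixes F :: "nat \<Rightarrow> nat \<Rightarrow> complex"
  assumes c: "c \<noteq> 0"
    and rows: "\<And>j l. j < N \<Longrightarrow> l < N \<Longrightarrow> (\<Sum>r<N. cnj (F j r) * F l r) = (if j = l then c else 0)"
    and "r < N" "r' < N"
  shows "(\<Sum>j<N. F j r * cnj (F j r')) = (if r = r' then c else 0)"
proof -
  define A where "A = mat N N (\<lambda>(j, r). cnj (F j r) / c)"
  define B where "B = mat N N (\<lambda>(r, l). F l r)"
  have A: "A \<in> carrier_mat N N" and B: "B \<in> carrier_mat N N"
    by (auto simp: A_def B_def)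
  have "A * B = 1\<^sub>m N"
  proof (rule eq_matI)
    fix j l assume "j < dim_row (1\<^sub>m N)" "l < dim_col (1\<^sub>m N)"
    then show "(A * B) $$ (j, l) = 1\<^sub>m N $$ (j, l)"
      using rows[of j l] c
      by (simp add: A_def B_def scalar_prod_def atLeast0LessThan sum_divide_distrib[symmetric])
  qed (auto simp: A_def B_def)
  then have "B * A = 1\<^sub>m N"
    using mat_mult_left_right_inverse[OF A B] by blast
  moreover have "(B * A) $$ (r, r') = (\<Sum>j<N. F j r * cnj (F j r')) / c"
    using assms(3,4)
    by (simp add: A_def B_def scalar_prod_def atLeast0LessThan sum_divide_distrib[symmetric])
  ultimately have "(\<Sum>j<N. F j r * cnj (F j r')) / c = (if r = r' then 1 else 0)"
    using assms(3,4) by simp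
  then show ?thesis
    using c by (auto split: if_splits)
qed

lemma orthogonal_rows_imp_orthogonal_cols:
  fixes F :: "nat \<Rightarrow> 'r \<Rightarrow> complex"
  assumes "finite P" and "card P = N" and "c \<noteq> 0"
    and rows: "\<And>j l. j < N \<Longrightarrow> l < N \<Longrightarrow> (\<Sum>r\<in>P. cnj (F j r) * F l r) = (if j = l then c else 0)"
    and "r \<in> P" "r' \<in> P"
  shows "(\<Sum>j<N. F j r * cnj (F j r')) = (if r = r' then c else 0)"
proof -
  obtain h where h: "bij_betw h {0..<N} P"
    using ex_bij_betw_nat_finite assms(1,2) by blast
  then obtain i i' where i: "i < N" "r = h i" and i': "i' < N" "r' = h i'"
    using assms(5,6) by (auto simp: bij_betw_def)
  have "(\<Sum>j<N. F j (h i) * cnj (F j (h i'))) = (if i = i' then c else 0)"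
  proof (rule square_orthogonal_rows_imp_orthogonal_cols[OF assms(3) _ i(1) i'(1)])
    fix j l assume "j < N" "l < N"
    then show "(\<Sum>s<N. cnj (F j (h s)) * F l (h s)) = (if j = l then c else 0)"
      using rows sum.reindex_bij_betw[OF h, of "\<lambda>r. cnj (F j r) * F l r"]
      by (simp add: atLeast0LessThan)
  qed
  moreover have "h i = h i' \<longleftrightarrow> i = i'"
    using h i(1) i'(1) by (auto simp: bij_betw_def inj_on_def)
  ultimately show ?thesis
    using i i' by simp
qed

lemma std_onb_orthogonal:
  assumes "std_onb k Bs" "j < k^2" "l < k^2"
  shows "(\<Sum>x<k. \<Sum>y<k. cnj (Bs j x y) * Bs l x y) = (if j = l then of_nat k else 0)"
proof -
  have "k > 0"
    using assms(2) by (cases k) auto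
  moreover have "(1 / of_nat k) * (\<Sum>x<k. \<Sum>y<k. cnj (Bs j y x) * Bs l y x) = (if j = l then 1 else 0)"
    using assms unfolding std_onb_def by blast
  ultimately show ?thesis
    by (subst sum.swap) (auto split: if_splits)
qed

lemma std_onb_0:
  "std_onb k Bs \<Longrightarrow> x < k \<Longrightarrow> y < k \<Longrightarrow> Bs 0 x y = (if x = y then 1 else 0)"
  unfolding std_onb_def by blast

lemma std_onb_trace:
  assumes "std_onb k Bs" "j < k^2"
  shows "(\<Sum>x<k. Bs j x x) = (if j = 0 then of_nat k else 0)"
proof -
  have "0 < k^2"
    using assms(2) by (rule le_less_trans[OF le0])
  then have "(\<Sum>x<k. \<Sum>y<k. cnj (Bs 0 x y) * Bs j x y) = (if 0 = j then of_nat k else 0)"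
    using std_onb_orthogonal[OF assms(1) _ assms(2)] by blast
  moreover have "(\<Sum>x<k. \<Sum>y<k. cnj (Bs 0 x y) * Bs j x y)
      = (\<Sum>x<k. \<Sum>y<k. if x = y then Bs j x y else 0)"
    by (intro sum.cong refl) (simp add: std_onb_0[OF assms(1)])
  ultimately show ?thesis
    by auto
qed

lemma std_onb_complete:
  assumes onb: "std_onb k Bs" and "k > 0" and "x < k" "y < k" "x' < k" "y' < k"
  shows "(\<Sum>j<k^2. Bs j x y * cnj (Bs j x' y')) = (if x = x' \<and> y = y' then of_nat k else 0)"
proof -
  have "(\<Sum>j<k^2. (\<lambda>(u, v). Bs j u v) (x, y) * cnj ((\<lambda>(u, v). Bs j u v) (x', y')))
      = (if (x, y) = (x', y') then of_nat k else 0)"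
  proof (rule orthogonal_rows_imp_orthogonal_cols[where P = "{..<k} \<times> {..<k}"])
    fix j l assume "j < k^2" "l < k^2"
    have "(\<Sum>r\<in>{..<k} \<times> {..<k}. cnj ((\<lambda>(u, v). Bs j u v) r) * (\<lambda>(u, v). Bs l u v) r)
        = (\<Sum>(u, v)\<in>{..<k} \<times> {..<k}. cnj (Bs j u v) * Bs l u v)"
      by (intro sum.cong) auto
    also have "\<dots> = (\<Sum>u<k. \<Sum>v<k. cnj (Bs j u v) * Bs l u v)"
      by (rule sum.cartesian_product[symmetric])
    finally show "(\<Sum>r\<in>{..<k} \<times> {..<k}. cnj ((\<lambda>(u, v). Bs j u v) r) * (\<lambda>(u, v). Bs l u v) r)
        = (if j = l then of_nat k else 0)"
      using std_onb_orthogonal[OF onb \<open>j < k^2\<close> \<open>l < k^2\<close>] by simp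
  qed (use assms in \<open>auto simp: power2_eq_square\<close>)
  then show ?thesis
    by simp
qed

lemma idx_conv_PiE: "idx n k = {..<n} \<rightarrow>\<^sub>E {..<k}"
  by (simp add: idx_def atLeast0LessThan)

lemma finite_idx [simp]: "finite (idx n k)"
  by (simp add: idx_conv_PiE finite_PiE)

lemma idx_less: "x \<in> idx n k \<Longrightarrow> i < n \<Longrightarrow> x i < k"
  by (auto simp: idx_conv_PiE PiE_iff)

lemma idx_eq_iff: "x \<in> idx n k \<Longrightarrow> y \<in> idx n k \<Longrightarrow> x = y \<longleftrightarrow> (\<forall>i<n. x i = y i)"
  by (auto simp: idx_conv_PiE intro: PiE_ext)

lemma sum_idx_prod:
  "(\<Sum>\<sigma>\<in>idx n k. \<Prod>i<n. g i (\<sigma> i)) = (\<Prod>i<n. \<Sum>j<k. (g i j :: 'a :: comm_semiring_1))"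
  unfolding idx_conv_PiE by (rule prod_sum_PiE[symmetric]) auto

lemma sum_idx_idx_prod:
  "(\<Sum>x\<in>idx n k. \<Sum>y\<in>idx n k. \<Prod>i<n. g i (x i) (y i))
    = (\<Prod>i<n. \<Sum>u<k. \<Sum>v<k. (g i u v :: 'a :: comm_semiring_1))"
proof -
  have "(\<Sum>x\<in>idx n k. \<Sum>y\<in>idx n k. \<Prod>i<n. g i (x i) (y i))
      = (\<Sum>x\<in>idx n k. \<Prod>i<n. \<Sum>v<k. g i (x i) v)"
    by (intro sum.cong refl) (rule sum_idx_prod)
  also have "\<dots> = (\<Prod>i<n. \<Sum>u<k. \<Sum>v<k. g i u v)"
    by (rule sum_idx_prod)
  finally show ?thesis .
qed

lemma prod_if_else_zero:
  "(\<Prod>i<n. if P i then c else 0) = (if \<forall>i<n. P i then c ^ n else (0 :: 'a :: comm_semiring_1))"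
  by (induction n) (auto simp: less_Suc_eq mult.commute)

lemma tensor_basis_apply [simp]:
  "x \<in> idx n k \<Longrightarrow> y \<in> idx n k \<Longrightarrow> tensor_basis n k Bs \<sigma> x y = (\<Prod>i<n. Bs (\<sigma> i) (x i) (y i))"
  by (simp add: tensor_basis_def)

lemma tensor_basis_matspace: "tensor_basis n k Bs \<sigma> \<in> matspace n k"
  unfolding matspace_def tensor_basis_def by auto

lemma efron_stein_matspace: "efron_stein n k Bs X S \<in> matspace n k"
  unfolding matspace_def efron_stein_def tensor_basis_def by auto

lemma tensor_basis_orthonormal:
  assumes onb: "std_onb k Bs" and "k > 0" and \<tau>: "\<tau> \<in> idx n (k^2)" and \<sigma>: "\<sigma> \<in> idx n (k^2)"
  shows "ipn n k (tensor_basis n k Bs \<tau>) (tensor_basis n k Bs \<sigma>) = (if \<tau> = \<sigma> then 1 else 0)"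
proof -
  have "(\<Sum>x\<in>idx n k. \<Sum>y\<in>idx n k.
          cnj (tensor_basis n k Bs \<tau> y x) * tensor_basis n k Bs \<sigma> y x)
      = (\<Sum>x\<in>idx n k. \<Sum>y\<in>idx n k. \<Prod>i<n. cnj (Bs (\<tau> i) (y i) (x i)) * Bs (\<sigma> i) (y i) (x i))"
    by (intro sum.cong refl) (simp add: prod.distrib)
  also have "\<dots> = (\<Prod>i<n. \<Sum>u<k. \<Sum>v<k. cnj (Bs (\<tau> i) v u) * Bs (\<sigma> i) v u)"
    by (rule sum_idx_idx_prod)
  also have "\<dots> = (\<Prod>i<n. if \<tau> i = \<sigma> i then of_nat k else 0)"
    using \<tau> \<sigma> std_onb_orthogonal[OF onb]
    by (intro prod.cong refl) (subst sum.swap, simp add: idx_less)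
  also have "\<dots> = (if \<tau> = \<sigma> then of_nat k ^ n else 0)"
    unfolding prod_if_else_zero idx_eq_iff[OF \<tau> \<sigma>] ..
  finally show ?thesis
    unfolding ipn_def using \<open>k > 0\<close> by simp
qed

lemma tensor_basis_complete:
  assumes onb: "std_onb k Bs" and "k > 0"
    and xy: "x \<in> idx n k" "y \<in> idx n k" "x' \<in> idx n k" "y' \<in> idx n k"
  shows "(\<Sum>\<sigma>\<in>idx n (k^2). tensor_basis n k Bs \<sigma> x y * cnj (tensor_basis n k Bs \<sigma> x' y'))
     = (if x = x' \<and> y = y' then of_nat k ^ n else 0)"
proof -
  have "(\<Sum>\<sigma>\<in>idx n (k^2). tensor_basis n k Bs \<sigma> x y * cnj (tensor_basis n k Bs \<sigma> x' y'))
     = (\<Sum>\<sigma>\<in>idx n (k^2). \<Prod>i<n. Bs (\<sigma> i) (x i) (y i) * cnj (Bs (\<sigma> i) (x' i) (y' i)))"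
    by (intro sum.cong refl) (simp add: xy prod.distrib)
  also have "\<dots> = (\<Prod>i<n. \<Sum>j<k^2. Bs j (x i) (y i) * cnj (Bs j (x' i) (y' i)))"
    by (rule sum_idx_prod)
  also have "\<dots> = (\<Prod>i<n. if x i = x' i \<and> y i = y' i then of_nat k else 0)"
    using xy by (intro prod.cong refl std_onb_complete[OF onb \<open>k > 0\<close>]) (auto simp: idx_less)
  also have "\<dots> = (if x = x' \<and> y = y' then of_nat k ^ n else 0)"
    unfolding prod_if_else_zero idx_eq_iff[OF xy(1,3)] idx_eq_iff[OF xy(2,4)] by auto
  finally show ?thesis .
qed

lemma ipn_sum_right:
  "ipn n k X (\<lambda>x y. \<Sum>\<sigma>\<in>F. c \<sigma> * Y \<sigma> x y) = (\<Sum>\<sigma>\<in>F. c \<sigma> * ipn n k X (Y \<sigma>))"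
  unfolding ipn_def
  by (simp add: sum_distrib_left sum_distrib_right mult_ac sum.swap[where B = F])

lemma ipn_cong_right:
  "(\<And>x y. x \<in> idx n k \<Longrightarrow> y \<in> idx n k \<Longrightarrow> Y x y = Y' x y) \<Longrightarrow> ipn n k X Y = ipn n k X Y'"
  unfolding ipn_def by (simp cong: sum.cong)

lemma tensor_basis_expansion:
  assumes onb: "std_onb k Bs" and "k > 0" and xy: "x \<in> idx n k" "y \<in> idx n k"
  shows "X x y = (\<Sum>\<sigma>\<in>idx n (k^2). ipn n k (tensor_basis n k Bs \<sigma>) X * tensor_basis n k Bs \<sigma> x y)"
proof -
  let ?I = "idx n k" and ?J = "idx n (k^2)" and ?t = "tensor_basis n k Bs"
  let ?K = "of_nat k ^ n :: complex"
  have "(\<Sum>\<sigma>\<in>?J. ipn n k (?t \<sigma>) X * ?t \<sigma> x y)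
      = (\<Sum>x'\<in>?I. \<Sum>y'\<in>?I. X y' x' * (\<Sum>\<sigma>\<in>?J. ?t \<sigma> x y * cnj (?t \<sigma> y' x'))) / ?K"
    unfolding ipn_def
    by (simp add: sum_distrib_left sum_distrib_right sum_divide_distrib mult_ac sum.swap[where A = ?J])
  also have "\<dots> = (\<Sum>x'\<in>?I. \<Sum>y'\<in>?I. if y' = x then if x' = y then X x y * ?K else 0 else 0) / ?K"
  proof (intro arg_cong2[where f = "(/)"] sum.cong refl)
    fix x' y' assume "x' \<in> ?I" "y' \<in> ?I"
    then show "X y' x' * (\<Sum>\<sigma>\<in>?J. ?t \<sigma> x y * cnj (?t \<sigma> y' x'))
        = (if y' = x then if x' = y then X x y * ?K else 0 else 0)"
      using tensor_basis_complete[OF onb \<open>k > 0\<close> xy \<open>y' \<in> ?I\<close> \<open>x' \<in> ?I\<close>] by auto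
  qed
  also have "\<dots> = X x y"
    using xy \<open>k > 0\<close> by simp
  finally show ?thesis ..
qed

lemma coeffs_eq_ipn:
  assumes onb: "std_onb k Bs" and "k > 0" and "\<sigma> \<in> idx n (k^2)"
  shows "coeffs n k Bs X \<sigma> = ipn n k (tensor_basis n k Bs \<sigma>) X"
proof -
  let ?J = "idx n (k^2)" and ?t = "tensor_basis n k Bs"
  have "coeffs n k Bs X = (\<lambda>\<sigma>. if \<sigma> \<in> ?J then ipn n k (?t \<sigma>) X else 0)"
    unfolding coeffs_def
  proof (rule the_equality)
    show "(\<forall>\<sigma>. \<sigma> \<notin> ?J \<longrightarrow> (if \<sigma> \<in> ?J then ipn n k (?t \<sigma>) X else 0) = 0) \<and>
        (\<forall>x\<in>idx n k. \<forall>y\<in>idx n k.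
          X x y = (\<Sum>\<sigma>\<in>?J. (if \<sigma> \<in> ?J then ipn n k (?t \<sigma>) X else 0) * ?t \<sigma> x y))"
      using tensor_basis_expansion[OF onb \<open>k > 0\<close>] by simp
  next
    fix c
    assume c: "(\<forall>\<sigma>. \<sigma> \<notin> ?J \<longrightarrow> c \<sigma> = 0) \<and>
        (\<forall>x\<in>idx n k. \<forall>y\<in>idx n k. X x y = (\<Sum>\<sigma>\<in>?J. c \<sigma> * ?t \<sigma> x y))"
    have "ipn n k (?t \<tau>) X = c \<tau>" if "\<tau> \<in> ?J" for \<tau>
    proof -
      have "ipn n k (?t \<tau>) X = ipn n k (?t \<tau>) (\<lambda>x y. \<Sum>\<sigma>\<in>?J. c \<sigma> * ?t \<sigma> x y)"
        using c by (intro ipn_cong_right) auto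
      also have "\<dots> = (\<Sum>\<sigma>\<in>?J. c \<sigma> * ipn n k (?t \<tau>) (?t \<sigma>))"
        by (rule ipn_sum_right)
      also have "\<dots> = (\<Sum>\<sigma>\<in>?J. if \<tau> = \<sigma> then c \<sigma> else 0)"
        using tensor_basis_orthonormal[OF onb \<open>k > 0\<close> that] by (intro sum.cong) auto
      finally show ?thesis
        using that by simp
    qed
    then show "c = (\<lambda>\<sigma>. if \<sigma> \<in> ?J then ipn n k (?t \<sigma>) X else 0)"
      using c by auto
  qed
  then show ?thesis
    using assms(3) by simp
qed

lemma matspace_eqI:
  assumes onb: "std_onb k Bs" and "k > 0" and "X \<in> matspace n k" "Y \<in> matspace n k"
    and coeff_eq: "\<And>\<sigma>. \<sigma> \<in> idx n (k^2) \<Longrightarrow>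
      ipn n k (tensor_basis n k Bs \<sigma>) X = ipn n k (tensor_basis n k Bs \<sigma>) Y"
  shows "X = Y"
proof (intro ext)
  fix x y
  show "X x y = Y x y"
  proof (cases "x \<in> idx n k \<and> y \<in> idx n k")
    case True
    let ?t = "tensor_basis n k Bs"
    have "X x y = (\<Sum>\<sigma>\<in>idx n (k^2). ipn n k (?t \<sigma>) X * ?t \<sigma> x y)"
      using True by (intro tensor_basis_expansion[OF onb \<open>k > 0\<close>]) auto
    also have "\<dots> = (\<Sum>\<sigma>\<in>idx n (k^2). ipn n k (?t \<sigma>) Y * ?t \<sigma> x y)"
      by (simp add: coeff_eq)
    also have "\<dots> = Y x y"
      using True by (intro tensor_basis_expansion[OF onb \<open>k > 0\<close>, symmetric]) auto
    finally show ?thesis .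
  next
    case False
    then show ?thesis
      using assms(3,4) unfolding matspace_def by auto
  qed
qed

definition support :: "nat \<Rightarrow> (nat \<Rightarrow> nat) \<Rightarrow> nat set" where
  "support n \<sigma> = {i \<in> {0..<n}. \<sigma> i \<noteq> 0}"

lemma efron_stein_linear_functional:
  fixes L :: "cmatn \<Rightarrow> complex"
  assumes onb: "std_onb k Bs" and "k > 0"
    and L_sum: "\<And>c. L (\<lambda>x y. \<Sum>\<sigma>\<in>idx n (k^2). c \<sigma> * tensor_basis n k Bs \<sigma> x y)
      = (\<Sum>\<sigma>\<in>idx n (k^2). c \<sigma> * L (tensor_basis n k Bs \<sigma>))"
    and L_cong: "\<And>Y Y'. (\<And>x y. x \<in> idx n k \<Longrightarrow> y \<in> idx n k \<Longrightarrow> Y x y = Y' x y) \<Longrightarrow> L Y = L Y'"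
    and L_vanish: "\<And>\<sigma>. \<sigma> \<in> idx n (k^2) \<Longrightarrow> support n \<sigma> \<noteq> S' \<Longrightarrow> L (tensor_basis n k Bs \<sigma>) = 0"
  shows "L (efron_stein n k Bs X S) = (if S = S' then L X else 0)"
proof -
  let ?J = "idx n (k^2)" and ?t = "tensor_basis n k Bs" and ?c = "coeffs n k Bs X"
  have "L (efron_stein n k Bs X S)
      = L (\<lambda>x y. \<Sum>\<sigma>\<in>?J. (if support n \<sigma> = S then ?c \<sigma> else 0) * ?t \<sigma> x y)"
    unfolding efron_stein_def support_def
    by (intro arg_cong[where f = L] ext) (auto simp: sum.inter_filter intro: sum.cong)
  also have "\<dots> = (\<Sum>\<sigma>\<in>?J. (if support n \<sigma> = S then ?c \<sigma> else 0) * L (?t \<sigma>))"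
    by (rule L_sum)
  also have "\<dots> = (\<Sum>\<sigma>\<in>?J. if S = S' then ?c \<sigma> * L (?t \<sigma>) else 0)"
    by (intro sum.cong refl) (auto simp: L_vanish)
  also have "\<dots> = (if S = S' then L X else 0)"
  proof -
    have "L X = L (\<lambda>x y. \<Sum>\<sigma>\<in>?J. ?c \<sigma> * ?t \<sigma> x y)"
      by (intro L_cong) (simp add: coeffs_eq_ipn[OF onb \<open>k > 0\<close>] tensor_basis_expansion[OF onb \<open>k > 0\<close>])
    then show ?thesis
      by (simp add: L_sum)
  qed
  finally show ?thesis .
qed

lemma ipn_tensor_basis_efron_stein:
  assumes onb: "std_onb k Bs" and "k > 0" and \<tau>: "\<tau> \<in> idx n (k^2)"
  shows "ipn n k (tensor_basis n k Bs \<tau>) (efron_stein n k Bs X S)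
    = (if S = support n \<tau> then ipn n k (tensor_basis n k Bs \<tau>) X else 0)"
  by (rule efron_stein_linear_functional[OF onb \<open>k > 0\<close>])
    (auto simp: ipn_sum_right tensor_basis_orthonormal[OF onb \<open>k > 0\<close> \<tau>] intro: ipn_cong_right)

lemma markov_pairing_sum_right:
  "markov_pairing n mA mB psi M (\<lambda>x y. \<Sum>\<sigma>\<in>F. c \<sigma> * Q \<sigma> x y)
    = (\<Sum>\<sigma>\<in>F. c \<sigma> * markov_pairing n mA mB psi M (Q \<sigma>))"
  unfolding markov_pairing_def
  by (simp add: sum_distrib_left sum_distrib_right mult_ac sum.swap[where B = F])

lemma markov_pairing_cong_right:
  "(\<And>x y. x \<in> idx n mB \<Longrightarrow> y \<in> idx n mB \<Longrightarrow> Q x y = Q' x y)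
    \<Longrightarrow> markov_pairing n mA mB psi M Q = markov_pairing n mA mB psi M Q'"
  unfolding markov_pairing_def by (simp cong: sum.cong)

definition site_pairing ::
    "nat \<Rightarrow> nat \<Rightarrow> (nat \<times> nat \<Rightarrow> nat \<times> nat \<Rightarrow> complex) \<Rightarrow> cmat1 \<Rightarrow> cmat1 \<Rightarrow> complex" where
  "site_pairing mA mB psi M N =
    (\<Sum>u<mA. \<Sum>u'<mA. \<Sum>v<mB. \<Sum>v'<mB. cnj (M u' u) * N v v' * psi (u', v') (u, v))"

lemma markov_pairing_tensor_basis:
  "markov_pairing n mA mB psi (tensor_basis n mA BA \<tau>) (tensor_basis n mB BB \<sigma>)
    = (\<Prod>i<n. site_pairing mA mB psi (BA (\<tau> i)) (BB (\<sigma> i)))"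
proof -
  let ?IA = "idx n mA" and ?IB = "idx n mB"
  have "markov_pairing n mA mB psi (tensor_basis n mA BA \<tau>) (tensor_basis n mB BB \<sigma>)
     = (\<Sum>a\<in>?IA. \<Sum>a'\<in>?IA. \<Sum>b\<in>?IB. \<Sum>b'\<in>?IB. \<Prod>i<n.
          cnj (BA (\<tau> i) (a' i) (a i)) * BB (\<sigma> i) (b i) (b' i) * psi (a' i, b' i) (a i, b i))"
    unfolding markov_pairing_def by (intro sum.cong refl) (simp add: prod.distrib)
  also have "\<dots> = (\<Sum>a\<in>?IA. \<Sum>a'\<in>?IA. \<Prod>i<n. \<Sum>v<mB. \<Sum>v'<mB.
          cnj (BA (\<tau> i) (a' i) (a i)) * BB (\<sigma> i) v v' * psi (a' i, v') (a i, v))"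
    by (intro sum.cong refl) (rule sum_idx_idx_prod)
  also have "\<dots> = (\<Prod>i<n. \<Sum>u<mA. \<Sum>u'<mA. \<Sum>v<mB. \<Sum>v'<mB.
          cnj (BA (\<tau> i) u' u) * BB (\<sigma> i) v v' * psi (u', v') (u, v))"
    by (rule sum_idx_idx_prod)
  finally show ?thesis
    unfolding site_pairing_def .
qed

lemma site_pairing_id_right:
  assumes margA: "\<forall>a<mA. \<forall>a'<mA. marg_A mB psi a a' = (if a = a' then 1 / of_nat mA else 0)"
    and N_id: "\<And>v v'. v < mB \<Longrightarrow> v' < mB \<Longrightarrow> N v v' = (if v = v' then 1 else 0)"
  shows "site_pairing mA mB psi M N = (\<Sum>u<mA. cnj (M u u)) / of_nat mA"
proof -
  have "site_pairing mA mB psi M N = (\<Sum>u<mA. \<Sum>u'<mA. cnj (M u' u) * marg_A mB psi u' u)"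
    unfolding site_pairing_def marg_A_def
    by (intro sum.cong refl) (simp add: N_id if_distrib[where f = "\<lambda>a. _ * a * _"] sum_distrib_left cong: if_cong)
  also have "\<dots> = (\<Sum>u<mA. \<Sum>u'<mA. if u' = u then cnj (M u u) / of_nat mA else 0)"
    by (intro sum.cong refl) (simp add: margA)
  finally show ?thesis
    by (simp add: sum_divide_distrib)
qed

lemma site_pairing_id_left:
  assumes margB: "\<forall>b<mB. \<forall>b'<mB. marg_B mA psi b b' = (if b = b' then 1 / of_nat mB else 0)"
    and M_id: "\<And>u u'. u < mA \<Longrightarrow> u' < mA \<Longrightarrow> M u u' = (if u = u' then 1 else 0)"
  shows "site_pairing mA mB psi M N = (\<Sum>v<mB. N v v) / of_nat mB"
proof -
  have "site_pairing mA mB psi M N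
      = (\<Sum>u<mA. \<Sum>u'<mA. if u' = u then \<Sum>v<mB. \<Sum>v'<mB. N v v' * psi (u, v') (u, v) else 0)"
    unfolding site_pairing_def by (intro sum.cong refl) (auto simp: M_id)
  also have "\<dots> = (\<Sum>u<mA. \<Sum>v<mB. \<Sum>v'<mB. N v v' * psi (u, v') (u, v))"
    by simp
  also have "\<dots> = (\<Sum>v<mB. \<Sum>v'<mB. N v v' * marg_B mA psi v' v)"
    unfolding marg_B_def by (simp add: sum_distrib_left sum.swap[where A = "{..<mA}"])
  also have "\<dots> = (\<Sum>v<mB. \<Sum>v'<mB. if v' = v then N v v / of_nat mB else 0)"
    by (intro sum.cong refl) (simp add: margB)
  finally show ?thesis
    by (simp add: sum_divide_distrib)
qed

lemma markov_pairing_tensor_basis_eq_0: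
  assumes onbA: "std_onb mA BA" and onbB: "std_onb mB BB"
    and margA: "\<forall>a<mA. \<forall>a'<mA. marg_A mB psi a a' = (if a = a' then 1 / of_nat mA else 0)"
    and margB: "\<forall>b<mB. \<forall>b'<mB. marg_B mA psi b b' = (if b = b' then 1 / of_nat mB else 0)"
    and \<tau>: "\<tau> \<in> idx n (mA^2)" and \<sigma>: "\<sigma> \<in> idx n (mB^2)"
    and "support n \<tau> \<noteq> support n \<sigma>"
  shows "markov_pairing n mA mB psi (tensor_basis n mA BA \<tau>) (tensor_basis n mB BB \<sigma>) = 0"
proof -
  have "\<exists>i<n. (\<tau> i = 0) \<noteq> (\<sigma> i = 0)"
  proof (rule ccontr)
    assume "\<not> (\<exists>i<n. (\<tau> i = 0) \<noteq> (\<sigma> i = 0))"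
    then have "support n \<tau> = support n \<sigma>"
      unfolding support_def by auto
    with \<open>support n \<tau> \<noteq> support n \<sigma>\<close> show False ..
  qed
  then obtain i where i: "i < n" "(\<tau> i = 0) \<noteq> (\<sigma> i = 0)"
    by blast
  have "site_pairing mA mB psi (BA (\<tau> i)) (BB (\<sigma> i)) = 0"
  proof (cases "\<sigma> i = 0")
    case True
    have "site_pairing mA mB psi (BA (\<tau> i)) (BB 0) = cnj (\<Sum>u<mA. BA (\<tau> i) u u) / of_nat mA"
      by (simp add: site_pairing_id_right[OF margA] std_onb_0[OF onbB])
    then show ?thesis
      using True i std_onb_trace[OF onbA idx_less[OF \<tau> i(1)]] by simp
  next
    case False
    have "site_pairing mA mB psi (BA 0) (BB (\<sigma> i)) = (\<Sum>v<mB. BB (\<sigma> i) v v) / of_nat mB"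
      by (simp add: site_pairing_id_left[OF margB] std_onb_0[OF onbA])
    then show ?thesis
      using False i std_onb_trace[OF onbB idx_less[OF \<sigma> i(1)]] by simp
  qed
  then show ?thesis
    unfolding markov_pairing_tensor_basis using i(1) by (intro prod_zero) auto
qed

lemma markov_pairing_efron_stein:
  assumes onbA: "std_onb mA BA" and onbB: "std_onb mB BB" and "mB > 0"
    and margA: "\<forall>a<mA. \<forall>a'<mA. marg_A mB psi a a' = (if a = a' then 1 / of_nat mA else 0)"
    and margB: "\<forall>b<mB. \<forall>b'<mB. marg_B mA psi b b' = (if b = b' then 1 / of_nat mB else 0)"
    and \<tau>: "\<tau> \<in> idx n (mA^2)"
  shows "markov_pairing n mA mB psi (tensor_basis n mA BA \<tau>) (efron_stein n mB BB Q S)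
    = (if S = support n \<tau> then markov_pairing n mA mB psi (tensor_basis n mA BA \<tau>) Q else 0)"
  by (rule efron_stein_linear_functional[OF onbB \<open>mB > 0\<close>])
    (auto simp: markov_pairing_sum_right intro: markov_pairing_cong_right
      markov_pairing_tensor_basis_eq_0[OF onbA onbB margA margB \<tau>])

theorem proposition3p12:
  fixes n mA mB :: nat
    and psi :: "nat \<times> nat \<Rightarrow> nat \<times> nat \<Rightarrow> complex"
    and T :: "cmatn \<Rightarrow> cmatn"
    and BA BB :: "nat \<Rightarrow> cmat1"
    and Q :: cmatn
    and S :: "nat set"
  assumes "n > 0" and "mA > 0" and "mB > 0"
    and "is_state mA mB psi"
    and "\<forall>a<mA. \<forall>a'<mA. marg_A mB psi a a' = (if a = a' then 1 / of_nat mA else 0)"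
    and "\<forall>b<mB. \<forall>b'<mB. marg_B mA psi b b' = (if b = b' then 1 / of_nat mB else 0)"
    and "is_markov_op n mA mB psi T"
    and "std_onb mA BA" and "std_onb mB BB"
    and "Q \<in> matspace n mB"
    and "S \<subseteq> {0..<n}"
  shows "T (efron_stein n mB BB Q S) = efron_stein n mA BA (T Q) S"
proof -
  (* Neither the positivity and normalisation of psi nor n > 0 and S \<subseteq> {0..<n} are needed. *)
  note margA = assms(5) and margB = assms(6) and onbA = assms(8) and onbB = assms(9)
  have T_matspace: "\<And>Y. Y \<in> matspace n mB \<Longrightarrow> T Y \<in> matspace n mA"
    and T_adjoint: "\<And>M Y. M \<in> matspace n mA \<Longrightarrow> Y \<in> matspace n mB \<Longrightarrow>
      ipn n mA M (T Y) = markov_pairing n mA mB psi M Y"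
    using assms(7) unfolding is_markov_op_def by simp_all
  show ?thesis
  proof (rule matspace_eqI[OF onbA \<open>mA > 0\<close>])
    fix \<tau> assume \<tau>: "\<tau> \<in> idx n (mA^2)"
    let ?B\<tau> = "tensor_basis n mA BA \<tau>"
    have "ipn n mA ?B\<tau> (T (efron_stein n mB BB Q S))
        = markov_pairing n mA mB psi ?B\<tau> (efron_stein n mB BB Q S)"
      by (simp add: T_adjoint tensor_basis_matspace efron_stein_matspace)
    also have "\<dots> = (if S = support n \<tau> then markov_pairing n mA mB psi ?B\<tau> Q else 0)"
      by (rule markov_pairing_efron_stein[OF onbA onbB \<open>mB > 0\<close> margA margB \<tau>])
    also have "\<dots> = (if S = support n \<tau> then ipn n mA ?B\<tau> (T Q) else 0)"
      by (simp add: T_adjoint tensor_basis_matspace \<open>Q \<in> matspace n mB\<close>)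
    also have "\<dots> = ipn n mA ?B\<tau> (efron_stein n mA BA (T Q) S)"
      by (rule ipn_tensor_basis_efron_stein[OF onbA \<open>mA > 0\<close> \<tau>, symmetric])
    finally show "ipn n mA ?B\<tau> (T (efron_stein n mB BB Q S))
        = ipn n mA ?B\<tau> (efron_stein n mA BA (T Q) S)" .
  qed (simp_all add: T_matspace efron_stein_matspace)
qed

end
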